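(* There exists $n_0$ such that for all integers $n>n_0$: $$\langle \ell_n\alpha\rangle=3A\langle k_n\theta\rangle\quad\text{and}\quad\langle\ell_n\alpha^2\rangle=\langle k_n\theta^2\rangle-2B\langle k_n\theta\rangle.$$
   Context: Let $f(x)=Ax^3+Bx^2+Cx+D\in\mathbb{Z}[x]$ be irreducible with $A>0$, having exactly one real root $\alpha$. Put $p=3(B^2-3AC)$, $q=-2B^3+9ABC-27A^2D$, so that $27A^2f\!\left(\frac{x-B}{3A}\right)=x^3-px-q$, and put $\theta=3A\alpha+B$, the unique real root of $x^3-px-q$. Let $K=\mathbb{Q}(\theta)=\mathbb{Q}(\alpha)\subset\mathbb{R}$ with ring of integers $\mathcal{O}_K$, let $d$ be a positive integer with $\mathcal{O}_K\subseteq\frac1d\mathbb{Z}[\theta]$, and let $\lambda\in\mathcal{O}_K$ be a unit with $\lambda>1$. Define rationals $a_n,b_n,c_n$ by $a_n+b_n\theta+c_n\theta^2=\lambda^n$, and $k_n=dc_n$, $\ell_n=9A^2k_n$. For $x\in\mathbb{R}$, $\langle x\rangle=x-\lfloor x+\tfrac12\rfloor$. *)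

theory Defs
  imports "HOL-Analysis.Analysis" "HOL-Computational_Algebra.Polynomial"
begin

definition cfrac :: "real \<Rightarrow> real" where
  "cfrac x = x - of_int \<lfloor>x + 1/2\<rfloor>"

definition cubic_field :: "real \<Rightarrow> real set" where
  "cubic_field t = {x. \<exists>a b c :: rat. x = of_rat a + of_rat b * t + of_rat c * t^2}"

definition ring_of_integers :: "real \<Rightarrow> real set" where
  "ring_of_integers t = {x \<in> cubic_field t. algebraic_int x}"

end

theory Submission
  imports Defs "Berlekamp_Zassenhaus.Factor_Bound" "Jordan_Normal_Form.Char_Poly"
begin

text \<open>
  Besides its real root \<theta>, the depressed cubic x^3 - p x - q has two complex conjugate roots
  \<theta>', cnj \<theta>'; write x' for the image of x \<in> K under \<theta> \<mapsto> \<theta>'. Since d times a trace is an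
  integer, Newton's identities make 6 d^3 x |x'|^2 an integer for every x \<in> O_K. Applied to all
  powers of \<lambda> and of 1/\<lambda> this forces \<lambda> |\<lambda>'|^2 = 1, so |\<lambda>'| < 1.
  Now write d \<lambda>^n = u + v \<theta> + w \<theta>^2 with integers u, v, w, so that k_n = w. Subtracting the
  conjugate equation d \<lambda>'^n = u + v \<theta>' + w \<theta>'^2 from its complex conjugate shows that
  w \<theta> - v and w \<theta>^2 - u - p w are O(|\<lambda>'|^n): eventually k_n \<theta> and k_n \<theta>^2 are as close to
  integers as we like. The claim follows from 9 A^2 k \<alpha> = 3 A k \<theta> - 3 A B k and
  9 A^2 k \<alpha>^2 = k \<theta>^2 - 2 B k \<theta> + B^2 k, since multiplying small distances by bounded
  integers keeps them below 1/2.
\<close>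

lemma eigenvalue_int_mat_imp_algebraic_int:
  fixes x :: "'a :: field_char_0"
  assumes C: "C \<in> carrier_mat k k" and ev: "eigenvalue (map_mat of_int C) x"
  shows "algebraic_int x"
proof -
  have "map_mat (of_int :: int \<Rightarrow> 'a) C \<in> carrier_mat k k"
    using C by simp
  then have "poly (char_poly (map_mat of_int C)) x = 0"
    using eigenvalue_root_char_poly ev by blast
  moreover have "char_poly (map_mat (of_int :: int \<Rightarrow> 'a) C) = map_poly of_int (char_poly C)"
    by (rule of_int_hom.char_poly_hom) (use C in simp)
  moreover have "lead_coeff (char_poly C) = 1"
    using degree_monic_char_poly[OF C] by simp
  ultimately show ?thesis by (auto simp: algebraic_int_altdef_ipoly)
qed

definition companion_mat :: "int poly \<Rightarrow> int mat" where
  "companion_mat p = mat (degree p) (degree p)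
     (\<lambda>(i, j). if i + 1 < degree p then (if j = i + 1 then 1 else 0) else - Polynomial.coeff p j)"

lemma companion_mat_eigenvector:
  fixes x :: "'a :: field_char_0"
  assumes root: "poly (map_poly of_int p) x = 0" and monic: "lead_coeff p = 1"
  shows "eigenvector (map_mat of_int (companion_mat p)) (vec (degree p) (\<lambda>i. x ^ i)) x"
proof -
  define k where "k = degree p"
  define M :: "'a mat" where "M = map_mat of_int (companion_mat p)"
  have k_pos: "k > 0"
  proof (rule ccontr)
    assume "\<not> k > 0"
    then have "degree p = 0" by (simp add: k_def)
    then have "p = [:1:]" using monic by (metis degree_0_id)
    then show False using root by simp
  qed
  have last_row: "(\<Sum>j<k. of_int (Polynomial.coeff p j) * x ^ j) = - (x ^ k)"
  proof -
    have "0 = (\<Sum>j\<le>k. of_int (Polynomial.coeff p j) * x ^ j)"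
      using root by (simp add: poly_altdef k_def degree_map_poly coeff_map_poly)
    also have "\<dots> = (\<Sum>j<k. of_int (Polynomial.coeff p j) * x ^ j) + x ^ k"
      using monic by (simp add: lessThan_Suc_atMost[symmetric] k_def)
    finally show ?thesis by (simp add: eq_neg_iff_add_eq_0 add.commute)
  qed
  have row: "(\<Sum>j<k. M $$ (i, j) * x ^ j) = x * x ^ i" if i: "i < k" for i
  proof (cases "i + 1 < k")
    case True
    have "(\<Sum>j<k. M $$ (i, j) * x ^ j) = (\<Sum>j<k. if j = i + 1 then x ^ (i + 1) else 0)"
      using i True by (intro sum.cong) (auto simp: M_def companion_mat_def k_def)
    then show ?thesis using True by simp
  next
    case False
    then have "i = k - 1" using i by simp
    have "(\<Sum>j<k. M $$ (i, j) * x ^ j) = - (\<Sum>j<k. of_int (Polynomial.coeff p j) * x ^ j)"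
      using i False by (auto simp: M_def companion_mat_def k_def sum_negf intro!: sum.cong)
    also have "\<dots> = x * x ^ i"
      using last_row k_pos \<open>i = k - 1\<close> by (simp flip: power_Suc)
    finally show ?thesis .
  qed
  have "M *\<^sub>v vec k (\<lambda>i. x ^ i) = x \<cdot>\<^sub>v vec k (\<lambda>i. x ^ i)"
  proof (rule eq_vecI)
    fix i assume "i < dim_vec (x \<cdot>\<^sub>v vec k (\<lambda>i. x ^ i))"
    then have i: "i < k" by simp
    have "(M *\<^sub>v vec k (\<lambda>i. x ^ i)) $ i = (\<Sum>j<k. M $$ (i, j) * x ^ j)"
      using i by (simp add: M_def companion_mat_def k_def scalar_prod_def atLeast0LessThan)
    then show "(M *\<^sub>v vec k (\<lambda>i. x ^ i)) $ i = (x \<cdot>\<^sub>v vec k (\<lambda>i. x ^ i)) $ i"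
      using i row by simp
  qed (simp add: M_def companion_mat_def k_def)
  moreover have "vec k (\<lambda>i. x ^ i) \<noteq> 0\<^sub>v k"
    using k_pos by (metis index_vec index_zero_vec(1) one_neq_zero power_0)
  ultimately show ?thesis
    by (simp add: eigenvector_def M_def companion_mat_def k_def)
qed

lemma algebraic_int_power:
  fixes x :: "'a :: field_char_0"
  assumes "algebraic_int x"
  shows "algebraic_int (x ^ n)"
proof -
  obtain p :: "int poly" where root: "poly (map_poly of_int p) x = 0" and monic: "lead_coeff p = 1"
    using assms by (auto simp: algebraic_int_altdef_ipoly)
  define k where "k = degree p"
  define C where "C = companion_mat p"
  define v :: "'a vec" where "v = vec k (\<lambda>i. x ^ i)"
  have C: "C \<in> carrier_mat k k" by (simp add: C_def companion_mat_def k_def)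
  have ev: "eigenvector (map_mat of_int C) v x"
    using companion_mat_eigenvector[OF root monic] by (simp add: C_def v_def k_def)
  have "map_mat of_int (C ^\<^sub>m n) *\<^sub>v v = x ^ n \<cdot>\<^sub>v v"
    unfolding of_int_hom.mat_hom_pow[OF C] by (rule eigenvector_pow[OF _ ev]) (use C in simp)
  then have "eigenvector (map_mat of_int (C ^\<^sub>m n)) v (x ^ n)"
    using ev C by (auto simp: eigenvector_def)
  then show ?thesis
    using C by (intro eigenvalue_int_mat_imp_algebraic_int[of "C ^\<^sub>m n" k]) (auto simp: eigenvalue_def)
qed

lemma irreducible_imp_no_rat_root:
  fixes f :: "int poly" and r :: rat
  assumes irr: "irreducible f" and deg: "degree f > 1"
  shows "poly (map_poly of_int f) r \<noteq> 0"
proof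
  assume "poly (map_poly of_int f) r = 0"
  then have "[:-r, 1:] dvd map_poly of_int f"
    using poly_eq_0_iff_dvd by blast
  then obtain h where h: "map_poly of_int f = [:-r, 1:] * h"
    by (elim dvdE)
  have "h \<noteq> 0" using h deg by auto
  have "degree f = degree (map_poly (of_int :: int \<Rightarrow> rat) f)" by simp
  also have "\<dots> = 1 + degree h"
    unfolding h using \<open>h \<noteq> 0\<close> by (subst degree_mult_eq) auto
  finally have "degree h = degree f - 1" by simp
  obtain g' h' where f: "f = g' * h'" and "degree g' = 1" "degree h' = degree h"
    using rat_to_int_factor[OF h] by auto
  then have "degree g' > 0" "degree h' > 0"
    using deg \<open>degree h = degree f - 1\<close> by simp_all
  then have "\<not> g' dvd 1" "\<not> h' dvd 1"
    by (auto simp: poly_dvd_1)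
  then show False
    using irr f irreducibleD by blast
qed

lemma depressed_cubic_root_iff:
  fixes x :: "'a :: field_char_0" and A B C D :: int
  assumes "A \<noteq> 0"
  defines "y \<equiv> 3 * of_int A * x + of_int B"
  shows "y ^ 3 = of_int (3 * (B\<^sup>2 - 3 * A * C)) * y + of_int (- 2 * B ^ 3 + 9 * A * B * C - 27 * A\<^sup>2 * D)
         \<longleftrightarrow> poly (map_poly of_int [:D, C, B, A:]) x = 0"
proof -
  have "y ^ 3 - of_int (3 * (B\<^sup>2 - 3 * A * C)) * y - of_int (- 2 * B ^ 3 + 9 * A * B * C - 27 * A\<^sup>2 * D)
        = 27 * (of_int A)\<^sup>2 * poly (map_poly of_int [:D, C, B, A:]) x"
    by (simp add: y_def of_int_hom.map_poly_pCons_hom algebra_simps power2_eq_square power3_eq_cube)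
  moreover have "L = P + Q \<longleftrightarrow> r = 0" if "L - P - Q = 27 * (of_int A)\<^sup>2 * r" for L P Q r :: 'a
    using that assms(1) by (auto simp: diff_diff_eq)
  ultimately show ?thesis by blast
qed

definition rat_independent_powers :: "'a :: field_char_0 \<Rightarrow> bool" where
  "rat_independent_powers t \<longleftrightarrow>
     (\<forall>a b c :: rat. of_rat a + of_rat b * t + of_rat c * t\<^sup>2 = 0 \<longrightarrow> a = 0 \<and> b = 0 \<and> c = 0)"

lemma rat_independent_powers_coords_eq:
  assumes "rat_independent_powers t"
    and "of_rat a + of_rat b * t + of_rat c * t\<^sup>2 = of_rat a' + of_rat b' * t + of_rat c' * t\<^sup>2"
  shows "a = a' \<and> b = b' \<and> c = c'"
proof -
  have "of_rat (a - a') + of_rat (b - b') * t + of_rat (c - c') * t\<^sup>2 = 0"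
    using assms(2) by (simp add: of_rat_diff algebra_simps)
  then show ?thesis using assms(1) unfolding rat_independent_powers_def by fastforce
qed

lemma rat_independent_powers_nonzero:
  assumes "rat_independent_powers t"
  shows "t \<noteq> 0"
  using assms unfolding rat_independent_powers_def by (metis add_0 mult_1 mult_zero_left of_rat_0 of_rat_1 one_neq_zero)

lemma depressed_cubic_rat_independent:
  fixes t :: "'a :: field_char_0" and p q :: rat
  assumes root: "t ^ 3 = of_rat p * t + of_rat q" and no_rat_root: "\<And>\<rho>. \<rho> ^ 3 \<noteq> p * \<rho> + q"
  shows "rat_independent_powers t"
  unfolding rat_independent_powers_def
proof (intro allI impI)
  fix a b c :: rat
  assume rel: "of_rat a + of_rat b * t + of_rat c * t\<^sup>2 = 0"
  have not_rat: "t \<noteq> of_rat \<rho>" for \<rho>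
  proof
    assume "t = of_rat \<rho>"
    then have "of_rat (\<rho> ^ 3) = (of_rat (p * \<rho> + q) :: 'a)"
      using root by (simp add: of_rat_add of_rat_mult of_rat_power)
    then show False using no_rat_root by (simp only: of_rat_eq_iff)
  qed
  show "a = 0 \<and> b = 0 \<and> c = 0"
  proof (cases "c = 0")
    case True
    have "b = 0"
    proof (rule ccontr)
      assume "b \<noteq> 0"
      then have "of_rat b * t = of_rat b * of_rat (- a / b)"
        using rel True by (simp add: of_rat_divide of_rat_minus eq_neg_iff_add_eq_0 add.commute)
      then show False using not_rat \<open>b \<noteq> 0\<close> by simp
    qed
    then show ?thesis using rel True by simp
  next
    case False
    define \<beta> \<gamma> where "\<beta> = - b / c" and "\<gamma> = - a / c"
    have "of_rat c * t\<^sup>2 = - (of_rat a + of_rat b * t)"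
      using rel by (simp only: add_eq_0_iff)
    also have "\<dots> = of_rat c * (of_rat \<beta> * t + of_rat \<gamma>)"
      using False by (simp add: \<beta>_def \<gamma>_def of_rat_divide of_rat_minus field_simps)
    finally have sq: "t\<^sup>2 = of_rat \<beta> * t + of_rat \<gamma>"
      using False by simp
    have "t ^ 3 = t * t\<^sup>2" by (simp add: power2_eq_square power3_eq_cube)
    also have "\<dots> = t * (of_rat \<beta> * t + of_rat \<gamma>)" by (simp only: sq)
    also have "\<dots> = of_rat \<beta> * t\<^sup>2 + of_rat \<gamma> * t" by (simp add: algebra_simps power2_eq_square)
    also have "\<dots> = of_rat (\<beta>\<^sup>2 + \<gamma>) * t + of_rat (\<beta> * \<gamma>)"
      by (subst sq) (simp add: of_rat_add of_rat_mult of_rat_power power2_eq_square algebra_simps)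
    finally have lin: "of_rat (\<beta>\<^sup>2 + \<gamma> - p) * t = of_rat (q - \<beta> * \<gamma>)"
      using root by (simp add: of_rat_diff algebra_simps)
    show ?thesis
    proof (cases "\<beta>\<^sup>2 + \<gamma> - p = 0")
      case True
      \<comment> \<open>then x^2 - \<beta> x - \<gamma> divides the cubic, leaving the rational root -\<beta>\<close>
      then have "p = \<beta>\<^sup>2 + \<gamma>" "q = \<beta> * \<gamma>"
        using lin by simp_all
      then have "(- \<beta>) ^ 3 = p * (- \<beta>) + q"
        by (simp add: power3_eq_cube power2_eq_square algebra_simps)
      then show ?thesis using no_rat_root by blast
    next
      case False
      then have "t = of_rat ((q - \<beta> * \<gamma>) / (\<beta>\<^sup>2 + \<gamma> - p))"
        using lin by (simp add: of_rat_divide field_simps)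
      then show ?thesis using not_rat by blast
    qed
  qed
qed

text \<open>The graph of the field embedding Q(t) \<rightarrow> Q(t') mapping t to t'; it is a function as soon as
  1, t, t^2 are linearly independent over Q.\<close>
definition cubic_conj :: "'a :: field_char_0 \<Rightarrow> 'b :: field_char_0 \<Rightarrow> 'a \<Rightarrow> 'b \<Rightarrow> bool" where
  "cubic_conj t t' x z \<longleftrightarrow> (\<exists>a b c :: rat.
     x = of_rat a + of_rat b * t + of_rat c * t\<^sup>2 \<and> z = of_rat a + of_rat b * t' + of_rat c * t'\<^sup>2)"

lemma cubic_conj_unique:
  assumes "rat_independent_powers t" "cubic_conj t t' x z" "cubic_conj t t' x z'"
  shows "z = z'"
  using assms rat_independent_powers_coords_eq[OF assms(1)] unfolding cubic_conj_def by metis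

lemma cubic_conj_1: "cubic_conj t t' 1 1"
  unfolding cubic_conj_def by (rule exI[of _ 1], rule exI[of _ 0], rule exI[of _ 0]) simp

lemma depressed_cubic_coords_mult:
  fixes t :: "'a :: field_char_0"
  assumes "t ^ 3 = of_int p * t + of_int q"
  shows "(of_rat a + of_rat b * t + of_rat c * t\<^sup>2) * (of_rat a' + of_rat b' * t + of_rat c' * t\<^sup>2) =
     of_rat (a * a' + of_int q * (b * c' + c * b'))
     + of_rat (a * b' + b * a' + of_int p * (b * c' + c * b') + of_int q * c * c') * t
     + of_rat (a * c' + b * b' + c * a' + of_int p * c * c') * t\<^sup>2"
proof -
  have "(of_rat a + of_rat b * t + of_rat c * t\<^sup>2) * (of_rat a' + of_rat b' * t + of_rat c' * t\<^sup>2)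
     - (of_rat (a * a' + of_int q * (b * c' + c * b'))
        + of_rat (a * b' + b * a' + of_int p * (b * c' + c * b') + of_int q * c * c') * t
        + of_rat (a * c' + b * b' + c * a' + of_int p * c * c') * t\<^sup>2)
     = (of_rat (b * c' + c * b') + of_rat (c * c') * t) * (t ^ 3 - of_int p * t - of_int q)"
    by (simp add: of_rat_add of_rat_mult algebra_simps power2_eq_square power3_eq_cube)
  then show ?thesis using assms by simp
qed

lemma cubic_conj_mult:
  assumes "t ^ 3 = of_int p * t + of_int q" "t' ^ 3 = of_int p * t' + of_int q"
    and "cubic_conj t t' x z" "cubic_conj t t' y w"
  shows "cubic_conj t t' (x * y) (z * w)"
proof -
  obtain a b c where x: "x = of_rat a + of_rat b * t + of_rat c * t\<^sup>2"
      and z: "z = of_rat a + of_rat b * t' + of_rat c * t'\<^sup>2"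
    using assms(3) unfolding cubic_conj_def by blast
  obtain a' b' c' where y: "y = of_rat a' + of_rat b' * t + of_rat c' * t\<^sup>2"
      and w: "w = of_rat a' + of_rat b' * t' + of_rat c' * t'\<^sup>2"
    using assms(4) unfolding cubic_conj_def by blast
  show ?thesis
    unfolding cubic_conj_def x y z w depressed_cubic_coords_mult[OF assms(1)]
      depressed_cubic_coords_mult[OF assms(2)] by blast
qed

lemma cubic_conj_power:
  assumes "t ^ 3 = of_int p * t + of_int q" "t' ^ 3 = of_int p * t' + of_int q" "cubic_conj t t' x z"
  shows "cubic_conj t t' (x ^ n) (z ^ n)"
  by (induction n) (auto simp: cubic_conj_1 intro: cubic_conj_mult[OF assms(1,2) assms(3)])

lemma cubic_root_of_quadratic_cofactor:
  fixes t y p q :: "'a :: comm_ring_1"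
  assumes "t ^ 3 = p * t + q" "y\<^sup>2 + t * y + t\<^sup>2 - p = 0"
  shows "y ^ 3 = p * y + q"
proof -
  have "y ^ 3 - (p * y + q) = (y - t) * (y\<^sup>2 + t * y + t\<^sup>2 - p) + (t ^ 3 - (p * t + q))"
    by (simp add: algebra_simps power2_eq_square power3_eq_cube)
  also have "\<dots> = 0" by (simp only: assms diff_self mult_zero_right add_0)
  finally show ?thesis by simp
qed

lemma unique_real_root_imp_discriminant_pos:
  fixes t p q :: real
  assumes root: "t ^ 3 = p * t + q" and unique: "\<And>y. y ^ 3 = p * y + q \<Longrightarrow> y = t"
    and "t \<noteq> 0"
  shows "3 * t\<^sup>2 - 4 * p > 0"
proof (rule ccontr)
  define s where "s = sqrt (4 * p - 3 * t\<^sup>2)"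
  assume "\<not> ?thesis"
  then have s2: "s\<^sup>2 = 4 * p - 3 * t\<^sup>2" by (simp add: s_def)
  have "(- t + s) / 2 = t" "(- t - s) / 2 = t"
    using s2 by (intro unique cubic_root_of_quadratic_cofactor[OF root];
        simp add: power2_eq_square field_simps)+
  then show False using \<open>t \<noteq> 0\<close> by simp
qed

text \<open>Newton's identity e3 = (p1^3 - 3 p1 p2 + 2 p3) / 6 for the three numbers x, z, cnj z.\<close>
lemma power_sums_norm_identity:
  fixes x :: real and z :: complex
  shows "6 * x * (cmod z)\<^sup>2 = (x + 2 * Re z) ^ 3 - 3 * (x + 2 * Re z) * (x\<^sup>2 + 2 * Re (z\<^sup>2))
           + 2 * (x ^ 3 + 2 * Re (z ^ 3))"
proof -
  have "Re (z\<^sup>2) = (Re z)\<^sup>2 - (Im z)\<^sup>2" "Re (z ^ 3) = (Re z) ^ 3 - 3 * Re z * (Im z)\<^sup>2"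
    by (simp_all add: power2_eq_square power3_eq_cube algebra_simps)
  moreover have "(cmod z)\<^sup>2 = (Re z)\<^sup>2 + (Im z)\<^sup>2" by (simp add: cmod_power2)
  ultimately show ?thesis
    by (simp add: algebra_simps power2_eq_square power3_eq_cube)
qed

lemma eq_1_if_scaled_powers_int:
  fixes N c :: real
  assumes "N > 0" "c > 0" "\<And>m. c * N ^ m \<in> \<int>" "\<And>m. c * inverse N ^ m \<in> \<int>"
  shows "N = 1"
proof -
  have not_lt_1: "\<not> (\<forall>m. c * x ^ m \<in> \<int>)" if "0 < x" "x < 1" for x
  proof
    assume int: "\<forall>m. c * x ^ m \<in> \<int>"
    have "\<exists>m. x ^ m < 1 / c" using real_arch_pow_inv[of "1 / c" x] that \<open>c > 0\<close> by simp
    then obtain m where "x ^ m < 1 / c" ..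
    then have "0 < c * x ^ m" "c * x ^ m < 1"
      using that \<open>c > 0\<close> by (simp_all add: pos_less_divide_eq mult.commute)
    then show False using int by (metis Ints_cases of_int_0_less_iff of_int_less_1_iff not_le int_one_le_iff_zero_less)
  qed
  show ?thesis
  proof (rule linorder_cases[of N 1])
    assume "N < 1" then show ?thesis using not_lt_1[of N] assms by auto
  next
    assume "N > 1" then show ?thesis using not_lt_1[of "inverse N"] assms by (auto simp: inverse_less_1_iff)
  qed
qed

lemma cfrac_eqI:
  assumes "x = of_int m + e" "\<bar>e\<bar> < 1/2"
  shows "cfrac x = e"
proof -
  have "\<lfloor>x + 1/2\<rfloor> = m" using assms by (intro floor_unique) auto
  then show ?thesis using assms by (simp add: cfrac_def)
qed

lemma cfrac_shifted_root:
  fixes A B u v w :: int and \<alpha> \<theta> \<epsilon> :: real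
  assumes \<theta>: "\<theta> = 3 * of_int A * \<alpha> + of_int B"
    and near: "\<bar>of_int w * \<theta> - of_int v\<bar> \<le> \<epsilon>" "\<bar>of_int w * \<theta>\<^sup>2 - of_int u\<bar> \<le> \<epsilon>"
    and small: "(3 * \<bar>of_int A\<bar> + 2 * \<bar>of_int B\<bar> + 1) * \<epsilon> < 1/2"
  shows "cfrac (9 * (of_int A)\<^sup>2 * of_int w * \<alpha>) = 3 * of_int A * cfrac (of_int w * \<theta>)
    \<and> cfrac (9 * (of_int A)\<^sup>2 * of_int w * \<alpha>\<^sup>2) = cfrac (of_int w * \<theta>\<^sup>2) - 2 * of_int B * cfrac (of_int w * \<theta>)"
proof -
  define e1 e2 where "e1 = of_int w * \<theta> - of_int v" and "e2 = of_int w * \<theta>\<^sup>2 - of_int u"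
  have "\<epsilon> \<ge> 0" using near by linarith
  moreover have "0 \<le> \<bar>of_int A\<bar> * \<epsilon>" "0 \<le> \<bar>of_int B\<bar> * \<epsilon>"
    using \<open>\<epsilon> \<ge> 0\<close> by simp_all
  ultimately have bounds: "\<epsilon> < 1/2" "3 * \<bar>of_int A\<bar> * \<epsilon> < 1/2" "\<epsilon> + 2 * \<bar>of_int B\<bar> * \<epsilon> < 1/2"
    using small unfolding distrib_right by linarith+
  have e1: "cfrac (of_int w * \<theta>) = e1" and e2: "cfrac (of_int w * \<theta>\<^sup>2) = e2"
    using near bounds by (auto intro!: cfrac_eqI simp: e1_def e2_def)
  have "\<bar>3 * of_int A * e1\<bar> \<le> 3 * \<bar>of_int A\<bar> * \<epsilon>"
    using near by (simp add: abs_mult e1_def mult_left_mono)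
  then have "cfrac (9 * (of_int A)\<^sup>2 * of_int w * \<alpha>) = 3 * of_int A * e1"
    using bounds by (intro cfrac_eqI[of _ "3 * A * v - 3 * A * B * w"])
      (simp_all add: \<theta> e1_def algebra_simps power2_eq_square)
  moreover have "\<bar>e2 - 2 * of_int B * e1\<bar> \<le> \<epsilon> + 2 * \<bar>of_int B\<bar> * \<epsilon>"
    using near abs_triangle_ineq4[of e2 "2 * of_int B * e1"]
    by (simp add: abs_mult e1_def e2_def) (smt (verit) mult_left_mono abs_ge_zero)
  then have "cfrac (9 * (of_int A)\<^sup>2 * of_int w * \<alpha>\<^sup>2) = e2 - 2 * of_int B * e1"
    using bounds by (intro cfrac_eqI[of _ "u - 2 * B * v + B\<^sup>2 * w"])
      (simp_all add: \<theta> e1_def e2_def algebra_simps power2_eq_square)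
  ultimately show ?thesis using e1 e2 by simp
qed

locale complex_cubic_field =
  fixes p q :: int and t :: real and d :: int
  assumes cubic_root: "t ^ 3 = of_int p * t + of_int q"
    and unique_real_root: "\<And>y. y ^ 3 = of_int p * y + of_int q \<Longrightarrow> y = t"
    and rat_independent: "rat_independent_powers t"
    and d_pos: "d > 0"
    and integral_basis: "\<And>x. x \<in> ring_of_integers t \<Longrightarrow>
          \<exists>u v w :: int. x = (of_int u + of_int v * t + of_int w * t\<^sup>2) / of_int d"
begin

definition s :: real where "s = sqrt (3 * t\<^sup>2 - 4 * of_int p)"

definition t' :: complex where "t' = Complex (- t / 2) (s / 2)"

lemma s_pos: "s > 0"
  using unique_real_root_imp_discriminant_pos[OF cubic_root unique_real_root
      rat_independent_powers_nonzero[OF rat_independent]]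
  by (simp add: s_def)

lemma s_square: "s\<^sup>2 = 3 * t\<^sup>2 - 4 * of_int p"
  using s_pos by (simp add: s_def)

lemma t'_root: "t' ^ 3 = of_int p * t' + of_int q"
proof (rule cubic_root_of_quadratic_cofactor)
  show "(of_real t :: complex) ^ 3 = of_int p * of_real t + of_int q"
    using arg_cong[OF cubic_root, of "of_real :: real \<Rightarrow> complex"] by simp
  show "t'\<^sup>2 + of_real t * t' + (of_real t)\<^sup>2 - of_int p = 0"
    using s_square by (simp add: t'_def complex_eq_iff power2_eq_square field_simps)
qed

lemma Re_t': "Re t' = - t / 2"
  by (simp add: t'_def)

lemma Re_t'_square: "Re (t'\<^sup>2) = of_int p - t\<^sup>2 / 2"
  using s_square by (simp add: t'_def power2_eq_square field_simps)

lemma t'_add_cnj: "t' + cnj t' = - of_real t"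
  by (simp add: t'_def complex_eq_iff)

lemma t'_mult_cnj: "t' * cnj t' = of_real (t\<^sup>2 - of_int p)"
  using s_square by (simp add: t'_def complex_eq_iff power2_eq_square field_simps)

lemma norm_t'_diff_cnj: "cmod (t' - cnj t') = s"
  using s_pos by (simp add: t'_def complex_eq_iff norm_complex_def)

abbreviation conj :: "real \<Rightarrow> complex \<Rightarrow> bool" where
  "conj \<equiv> cubic_conj t t'"

lemma conj_exists:
  assumes "x \<in> cubic_field t"
  obtains z where "conj x z"
  using assms unfolding cubic_field_def cubic_conj_def by blast

lemma conj_unique: "conj x z \<Longrightarrow> conj x z' \<Longrightarrow> z = z'"
  using cubic_conj_unique[OF rat_independent] .

lemma conj_mult: "conj x z \<Longrightarrow> conj y w \<Longrightarrow> conj (x * y) (z * w)"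
  using cubic_conj_mult[OF cubic_root t'_root] .

lemma conj_power: "conj x z \<Longrightarrow> conj (x ^ n) (z ^ n)"
  using cubic_conj_power[OF cubic_root t'_root] .

lemma integral_coords:
  assumes "conj x z" "algebraic_int x"
  obtains u v w :: int
  where "x = (of_int u + of_int v * t + of_int w * t\<^sup>2) / of_int d"
    and "of_int d * z = of_int u + of_int v * t' + of_int w * t'\<^sup>2"
proof -
  obtain a b c where x: "x = of_rat a + of_rat b * t + of_rat c * t\<^sup>2"
      and z: "z = of_rat a + of_rat b * t' + of_rat c * t'\<^sup>2"
    using assms(1) unfolding cubic_conj_def by blast
  have "x \<in> ring_of_integers t"
    using x assms(2) unfolding ring_of_integers_def cubic_field_def by blast
  then obtain u v w :: int where xu: "x = (of_int u + of_int v * t + of_int w * t\<^sup>2) / of_int d"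
    using integral_basis by blast
  have "of_rat a + of_rat b * t + of_rat c * t\<^sup>2
      = of_rat (of_int u / of_int d) + of_rat (of_int v / of_int d) * t + of_rat (of_int w / of_int d) * t\<^sup>2"
    using x xu d_pos by (simp add: of_rat_divide add_divide_distrib)
  then have "a = of_int u / of_int d \<and> b = of_int v / of_int d \<and> c = of_int w / of_int d"
    by (rule rat_independent_powers_coords_eq[OF rat_independent])
  then have "of_int d * (of_rat a :: complex) = of_int u" "of_int d * (of_rat b :: complex) = of_int v"
      "of_int d * (of_rat c :: complex) = of_int w"
    using d_pos by (simp_all add: of_rat_divide)
  moreover have "of_int d * z = of_int d * of_rat a + (of_int d * of_rat b) * t' + (of_int d * of_rat c) * t'\<^sup>2"
    unfolding z by (simp add: algebra_simps)
  ultimately have "of_int d * z = of_int u + of_int v * t' + of_int w * t'\<^sup>2"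
    by simp
  then show ?thesis using xu that by blast
qed

lemma scaled_trace_in_Ints:
  assumes "conj x z" "algebraic_int x"
  shows "of_int d * (x + 2 * Re z) \<in> \<int>"
proof -
  obtain u v w :: int where x: "x = (of_int u + of_int v * t + of_int w * t\<^sup>2) / of_int d"
      and z: "of_int d * z = of_int u + of_int v * t' + of_int w * t'\<^sup>2"
    using integral_coords[OF assms] .
  have "of_int d * Re z = of_int u + of_int v * Re t' + of_int w * Re (t'\<^sup>2)"
    using arg_cong[OF z, of Re] by simp
  moreover have "of_int d * x = of_int u + of_int v * t + of_int w * t\<^sup>2"
    using x d_pos by simp
  ultimately have "of_int d * (x + 2 * Re z) = of_int (3 * u + 2 * p * w)"
    by (simp add: Re_t' Re_t'_square algebra_simps)
  then show ?thesis by simp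
qed

lemma scaled_norm_in_Ints:
  assumes "conj x z" "algebraic_int x"
  shows "6 * of_int d ^ 3 * (x * (cmod z)\<^sup>2) \<in> \<int>"
proof -
  define S where "S k = x ^ k + 2 * Re (z ^ k)" for k
  have "of_int d * S k \<in> \<int>" for k
    unfolding S_def using scaled_trace_in_Ints[OF conj_power[OF assms(1)] algebraic_int_power[OF assms(2)]] .
  then obtain T1 T2 T3 :: int
    where T: "of_int d * S 1 = of_int T1" "of_int d * S 2 = of_int T2" "of_int d * S 3 = of_int T3"
    by (metis Ints_cases)
  have "6 * of_int d ^ 3 * (x * (cmod z)\<^sup>2) = of_int d ^ 3 * (6 * x * (cmod z)\<^sup>2)"
    by simp
  also have "\<dots> = of_int d ^ 3 * ((S 1) ^ 3 - 3 * S 1 * S 2 + 2 * S 3)"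
    by (simp add: power_sums_norm_identity S_def)
  also have "\<dots> = (of_int d * S 1) ^ 3 - 3 * of_int d * (of_int d * S 1) * (of_int d * S 2)
      + 2 * (of_int d)\<^sup>2 * (of_int d * S 3)"
    by (simp add: algebra_simps power2_eq_square power3_eq_cube)
  also have "\<dots> = of_int (T1 ^ 3 - 3 * d * T1 * T2 + 2 * d\<^sup>2 * T3)"
    unfolding T by simp
  finally show ?thesis by simp
qed

lemma unit_conj_norm_less_1:
  assumes lam: "lam \<in> ring_of_integers t" and inv: "inverse lam \<in> ring_of_integers t"
    and "lam > 1" and l: "conj lam l"
  shows "cmod l < 1"
proof -
  have norm_powers_int: "6 * of_int d ^ 3 * (x * (cmod z)\<^sup>2) ^ m \<in> \<int>"
    if "x \<in> ring_of_integers t" "conj x z" for x z m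
  proof -
    have "algebraic_int x" using that(1) by (simp add: ring_of_integers_def)
    then have "6 * of_int d ^ 3 * (x ^ m * (cmod (z ^ m))\<^sup>2) \<in> \<int>"
      using scaled_norm_in_Ints[OF conj_power[OF that(2)] algebraic_int_power] by blast
    then show ?thesis by (simp add: norm_power power_mult_distrib mult.commute flip: power_mult)
  qed
  obtain l' where l': "conj (inverse lam) l'"
    using inv conj_exists unfolding ring_of_integers_def by blast
  have "conj 1 (l * l')"
    using conj_mult[OF l l'] \<open>lam > 1\<close> by simp
  then have "l * l' = 1" using conj_unique cubic_conj_1 by blast
  then have "l \<noteq> 0" and norm_l': "cmod l' = inverse (cmod l)"
    using inverse_unique[of "cmod l" "cmod l'"] norm_mult[of l l'] by auto
  define N where "N = lam * (cmod l)\<^sup>2"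
  have "N > 0" using \<open>lam > 1\<close> \<open>l \<noteq> 0\<close> by (simp add: N_def)
  have "inverse lam * (cmod l')\<^sup>2 = inverse N"
    by (simp add: N_def norm_l' power_inverse)
  then have "6 * of_int d ^ 3 * inverse N ^ m \<in> \<int>" for m
    using norm_powers_int[OF inv l', of m] by simp
  moreover have "6 * of_int d ^ 3 * N ^ m \<in> \<int>" for m
    using norm_powers_int[OF lam l, of m] by (simp add: N_def)
  ultimately have "N = 1"
    using eq_1_if_scaled_powers_int[of N "6 * of_int d ^ 3"] \<open>N > 0\<close> d_pos by simp
  then have "(cmod l)\<^sup>2 = inverse lam"
    using \<open>lam > 1\<close> by (simp add: N_def field_simps)
  then have "(cmod l)\<^sup>2 < 1"
    using \<open>lam > 1\<close> by (simp add: inverse_less_1_iff)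
  then show ?thesis by (metis abs_norm_cancel abs_square_less_1)
qed

lemma coords_bounded_by_conj:
  assumes z: "of_int d * z = of_int u + of_int v * t' + of_int w * t'\<^sup>2"
  shows "\<bar>of_int w * t - of_int v\<bar> \<le> 2 * of_int d * (1 + cmod t') / s * cmod z"
    and "\<bar>of_int w * t\<^sup>2 - of_int (u + p * w)\<bar> \<le> 2 * of_int d * (1 + cmod t') / s * cmod z"
proof -
  define E where "E = of_int d * z"
  define \<delta>1 \<delta>2 where "\<delta>1 = of_int w * t - of_int v" and "\<delta>2 = of_int w * t\<^sup>2 - of_int (u + p * w)"
  have E: "E = of_int u + of_int v * t' + of_int w * t'\<^sup>2" using z by (simp add: E_def)
  then have cE: "cnj E = of_int u + of_int v * cnj t' + of_int w * (cnj t')\<^sup>2" by simp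
  \<comment> \<open>conjugating eliminates u, resp. v, and leaves multiples of t' - cnj t' = i s\<close>
  have "cnj E - E = (t' - cnj t') * of_real \<delta>1"
  proof -
    have "cnj E - E = (t' - cnj t') * (of_int w * (- (t' + cnj t')) - of_int v)"
      unfolding cE E by (simp add: algebra_simps power2_eq_square)
    then show ?thesis by (simp add: t'_add_cnj \<delta>1_def)
  qed
  then have "s * \<bar>\<delta>1\<bar> = cmod (cnj E - E)" by (simp add: norm_mult norm_t'_diff_cnj)
  also have "\<dots> \<le> 2 * cmod E" using norm_triangle_ineq4[of "cnj E" E] by simp
  finally have 1: "s * \<bar>\<delta>1\<bar> \<le> 2 * cmod E" .
  have "E * cnj t' - cnj E * t' = (t' - cnj t') * (of_int w * (t' * cnj t') - of_int u)"
    unfolding cE E by (simp add: algebra_simps power2_eq_square)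
  also have "\<dots> = (t' - cnj t') * of_real \<delta>2"
    by (simp add: t'_mult_cnj \<delta>2_def algebra_simps)
  finally have "s * \<bar>\<delta>2\<bar> = cmod (E * cnj t' - cnj E * t')" by (simp add: norm_mult norm_t'_diff_cnj)
  also have "\<dots> \<le> 2 * cmod E * cmod t'"
    using norm_triangle_ineq4[of "E * cnj t'" "cnj E * t'"] by (simp add: norm_mult)
  finally have 2: "s * \<bar>\<delta>2\<bar> \<le> 2 * cmod E * cmod t'" .
  have "cmod E = of_int d * cmod z" using d_pos by (simp add: E_def norm_mult)
  then show "\<bar>\<delta>1\<bar> \<le> 2 * of_int d * (1 + cmod t') / s * cmod z"
    and "\<bar>\<delta>2\<bar> \<le> 2 * of_int d * (1 + cmod t') / s * cmod z"
    using 1 2 s_pos d_pos by (auto simp: field_simps intro: order.trans mult_left_mono)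
qed

lemma power_coords_near_integers:
  assumes lam: "lam \<in> ring_of_integers t" "conj lam l" "cmod l < 1" and "\<epsilon> > 0"
  obtains M where "\<And>m a b c. m \<ge> M \<Longrightarrow> of_rat a + of_rat b * t + of_rat c * t\<^sup>2 = lam ^ m \<Longrightarrow>
      \<exists>u v w :: int. of_int d * of_rat c = (of_int w :: real) \<and>
        \<bar>of_int w * t - of_int v\<bar> \<le> \<epsilon> \<and> \<bar>of_int w * t\<^sup>2 - of_int u\<bar> \<le> \<epsilon>"
proof -
  define K where "K = 2 * of_int d * (1 + cmod t') / s"
  have "(\<lambda>m. K * cmod l ^ m) \<longlonglongrightarrow> 0"
    using lam(3) by (intro tendsto_mult_right_zero LIMSEQ_power_zero) simp
  then obtain M where M: "\<And>m. m \<ge> M \<Longrightarrow> K * cmod l ^ m < \<epsilon>"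
    using \<open>\<epsilon> > 0\<close> by (metis eventually_sequentially order_tendstoD(2))
  show thesis
  proof (rule that[of M])
    fix m a b c
    assume "m \<ge> M" and abc: "of_rat a + of_rat b * t + of_rat c * t\<^sup>2 = lam ^ m"
    have "algebraic_int (lam ^ m)"
      using lam(1) by (simp add: ring_of_integers_def algebraic_int_power)
    then obtain u v w :: int where x: "lam ^ m = (of_int u + of_int v * t + of_int w * t\<^sup>2) / of_int d"
        and z: "of_int d * l ^ m = of_int u + of_int v * t' + of_int w * t'\<^sup>2"
      using integral_coords[OF conj_power[OF lam(2)]] by blast
    have "of_rat a + of_rat b * t + of_rat c * t\<^sup>2
        = of_rat (of_int u / of_int d) + of_rat (of_int v / of_int d) * t + of_rat (of_int w / of_int d) * t\<^sup>2"
      using abc x d_pos by (simp add: of_rat_divide add_divide_distrib)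
    then have "c = of_int w / of_int d"
      using rat_independent_powers_coords_eq[OF rat_independent] by blast
    then have "of_int d * of_rat c = (of_int w :: real)"
      using d_pos by (simp add: of_rat_divide)
    moreover have "K * cmod (l ^ m) < \<epsilon>"
      using M[OF \<open>m \<ge> M\<close>] by (simp add: norm_power)
    then have "\<bar>of_int w * t - of_int v\<bar> \<le> \<epsilon>" "\<bar>of_int w * t\<^sup>2 - of_int (u + p * w)\<bar> \<le> \<epsilon>"
      using coords_bounded_by_conj[OF z] unfolding K_def by linarith+
    ultimately show "\<exists>u v w :: int. of_int d * of_rat c = (of_int w :: real) \<and>
        \<bar>of_int w * t - of_int v\<bar> \<le> \<epsilon> \<and> \<bar>of_int w * t\<^sup>2 - of_int u\<bar> \<le> \<epsilon>"
      by blast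
  qed
qed


lemma unit_power_coords_near_integers:
  assumes "lam \<in> ring_of_integers t" "inverse lam \<in> ring_of_integers t" "lam > 1" and "\<epsilon> > 0"
  obtains M where "\<And>m a b c. m \<ge> M \<Longrightarrow> of_rat a + of_rat b * t + of_rat c * t\<^sup>2 = lam ^ m \<Longrightarrow>
      \<exists>u v w :: int. of_int d * of_rat c = (of_int w :: real) \<and>
        \<bar>of_int w * t - of_int v\<bar> \<le> \<epsilon> \<and> \<bar>of_int w * t\<^sup>2 - of_int u\<bar> \<le> \<epsilon>"
proof -
  obtain l where l: "conj lam l"
    using assms(1) conj_exists unfolding ring_of_integers_def by blast
  then have "cmod l < 1" using unit_conj_norm_less_1 assms(1-3) by blast
  then show thesis using power_coords_near_integers assms(1,4) l that by blast
qed

end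

lemma complex_cubic_field_of_irreducible:
  fixes A B C D d :: int and \<alpha> :: real
  defines "\<theta> \<equiv> 3 * of_int A * \<alpha> + of_int B"
  assumes irr: "irreducible [:D, C, B, A:]" and A: "A \<noteq> 0"
    and root: "poly (map_poly of_int [:D, C, B, A:]) \<alpha> = 0"
    and uniq: "\<forall>x::real. poly (map_poly of_int [:D, C, B, A:]) x = 0 \<longrightarrow> x = \<alpha>"
    and d_pos: "d > 0"
    and basis: "\<forall>x \<in> ring_of_integers \<theta>. \<exists>u v w :: int. x = (of_int u + of_int v * \<theta> + of_int w * \<theta>\<^sup>2) / of_int d"
  shows "complex_cubic_field (3 * (B\<^sup>2 - 3 * A * C)) (- 2 * B ^ 3 + 9 * A * B * C - 27 * A\<^sup>2 * D) \<theta> d"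
proof -
  define p q where "p = 3 * (B\<^sup>2 - 3 * A * C)" and "q = - 2 * B ^ 3 + 9 * A * B * C - 27 * A\<^sup>2 * D"
  have root_iff: "y ^ 3 = of_int p * y + of_int q
      \<longleftrightarrow> poly (map_poly of_int [:D, C, B, A:]) ((y - of_int B) / (3 * of_int A)) = 0"
    for y :: "'a :: field_char_0"
  proof -
    have "3 * of_int A * ((y - of_int B) / (3 * of_int A)) + of_int B = y" using A by simp
    from depressed_cubic_root_iff[OF A, where x = "(y - of_int B) / (3 * of_int A)" and B = B and C = C
        and D = D, unfolded this]
    show ?thesis by (simp only: p_def q_def)
  qed
  have deg: "degree [:D, C, B, A:] > 1" using A by simp
  have \<theta>_\<alpha>: "(\<theta> - of_int B) / (3 * of_int A) = \<alpha>" using A by (simp add: \<theta>_def)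
  have cubic: "\<theta> ^ 3 = of_int p * \<theta> + of_int q"
    using root_iff[of \<theta>] root unfolding \<theta>_\<alpha> by blast
  have no_rat_root: "\<rho> ^ 3 \<noteq> of_int p * \<rho> + of_int q" for \<rho> :: rat
    using root_iff[of \<rho>] irreducible_imp_no_rat_root[OF irr deg] by blast
  have unique: "y = \<theta>" if "y ^ 3 = of_int p * y + of_int q" for y
  proof -
    have "(y - of_int B) / (3 * of_int A) = \<alpha>" using that root_iff[of y] uniq by blast
    then show ?thesis using A by (simp add: \<theta>_def field_simps)
  qed
  show ?thesis
    unfolding p_def[symmetric] q_def[symmetric]
  proof
    show "rat_independent_powers \<theta>"
      using depressed_cubic_rat_independent[of \<theta> "of_int p" "of_int q"] cubic no_rat_root by simp
    show "\<exists>u v w :: int. x = (of_int u + of_int v * \<theta> + of_int w * \<theta>\<^sup>2) / of_int d"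
      if "x \<in> ring_of_integers \<theta>" for x
      using basis that by blast
  qed (fact cubic unique d_pos)+
qed

theorem mainTheorem19:
  fixes A B C D :: int and \<alpha> lam :: real and d :: int
  assumes irr: "irreducible [:D, C, B, A:]"
    and Apos: "A > 0"
    and root: "poly (map_poly of_int [:D, C, B, A:]) \<alpha> = 0"
    and uniq: "\<forall>x::real. poly (map_poly of_int [:D, C, B, A:]) x = 0 \<longrightarrow> x = \<alpha>"
    and dpos: "d > 0"
    and dOK: "\<forall>x \<in> ring_of_integers (3 * of_int A * \<alpha> + of_int B).
               \<exists>u v w :: int. x = (of_int u + of_int v * (3 * of_int A * \<alpha> + of_int B)
                                  + of_int w * (3 * of_int A * \<alpha> + of_int B)^2) / of_int d"
    and lamOK: "lam \<in> ring_of_integers (3 * of_int A * \<alpha> + of_int B)"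
    and lamunit: "inverse lam \<in> ring_of_integers (3 * of_int A * \<alpha> + of_int B)"
    and lamgt: "lam > 1"
  shows "\<exists>n0::int. \<forall>n::int. n > n0 \<longrightarrow>
    (\<forall>a b c :: rat.
       (let \<theta> = 3 * of_int A * \<alpha> + of_int B in
        of_rat a + of_rat b * \<theta> + of_rat c * \<theta>^2 = lam powi n \<longrightarrow>
        (let k = of_int d * of_rat c; l = 9 * (of_int A)^2 * k in
           cfrac (l * \<alpha>) = 3 * of_int A * cfrac (k * \<theta>) \<and>
           cfrac (l * \<alpha>^2) = cfrac (k * \<theta>^2) - 2 * of_int B * cfrac (k * \<theta>))))"
proof -
  define \<theta> where "\<theta> = 3 * of_int A * \<alpha> + (of_int B :: real)"
  have "A \<noteq> 0" using Apos by simp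
  interpret complex_cubic_field "3 * (B\<^sup>2 - 3 * A * C)" "- 2 * B ^ 3 + 9 * A * B * C - 27 * A\<^sup>2 * D" \<theta> d
    unfolding \<theta>_def by (rule complex_cubic_field_of_irreducible[OF irr \<open>A \<noteq> 0\<close> root uniq dpos dOK])
  define \<epsilon> :: real where "\<epsilon> = 1 / (4 * (3 * \<bar>of_int A\<bar> + 2 * \<bar>of_int B\<bar> + 1))"
  have "\<epsilon> > 0" and small: "(3 * \<bar>of_int A\<bar> + 2 * \<bar>of_int B\<bar> + 1) * \<epsilon> < 1/2"
    by (simp_all add: \<epsilon>_def add_pos_nonneg)
  then obtain M where M: "\<And>m a b c. m \<ge> M \<Longrightarrow> of_rat a + of_rat b * \<theta> + of_rat c * \<theta>\<^sup>2 = lam ^ m \<Longrightarrow>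
      \<exists>u v w :: int. of_int d * of_rat c = (of_int w :: real) \<and>
        \<bar>of_int w * \<theta> - of_int v\<bar> \<le> \<epsilon> \<and> \<bar>of_int w * \<theta>\<^sup>2 - of_int u\<bar> \<le> \<epsilon>"
    using unit_power_coords_near_integers lamOK lamunit lamgt unfolding \<theta>_def by blast
  show ?thesis
    unfolding Let_def \<theta>_def[symmetric]
  proof (intro exI[of _ "int M"] allI impI)
    fix n :: int and a b c :: rat
    assume "int M < n" and "of_rat a + of_rat b * \<theta> + of_rat c * \<theta>\<^sup>2 = lam powi n"
    then have "M \<le> nat n" "of_rat a + of_rat b * \<theta> + of_rat c * \<theta>\<^sup>2 = lam ^ nat n"
      by (simp_all add: power_int_def)
    then obtain u v w :: int where "of_int d * of_rat c = (of_int w :: real)"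
        "\<bar>of_int w * \<theta> - of_int v\<bar> \<le> \<epsilon>" "\<bar>of_int w * \<theta>\<^sup>2 - of_int u\<bar> \<le> \<epsilon>"
      using M by blast
    then show "cfrac (9 * (of_int A)\<^sup>2 * (of_int d * of_rat c) * \<alpha>) = 3 * of_int A * cfrac (of_int d * of_rat c * \<theta>) \<and>
        cfrac (9 * (of_int A)\<^sup>2 * (of_int d * of_rat c) * \<alpha>\<^sup>2)
          = cfrac (of_int d * of_rat c * \<theta>\<^sup>2) - 2 * of_int B * cfrac (of_int d * of_rat c * \<theta>)"
      using cfrac_shifted_root[OF \<theta>_def _ _ small] by simp
  qed
qed

end
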